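(* Let $m,n$ be nonzero integers with $|m|<|n|$, let $h=\gcd(m,n)$, $p=|m|/h$, $q=|n|/h$. Let $u_1,u_2$ be vertices of type $a$ of $\Lambda_{m,n}$, with corresponding vertices $\bar u_1,\bar u_2$ of $T$ and corresponding $a$-lines $\ell_1,\ell_2$ of $\Upsilon_{m,n}$. Assume that some $t$-line intersects both $\ell_1$ and $\ell_2$, and let $\ell^{12}_2\subseteq\ell_2$ be the set of all points $\ell_2\cap\ell$ where $\ell$ ranges over the $t$-lines intersecting both $\ell_1$ and $\ell_2$. Then $\ell^{12}_2$ is a set of equally spaced vertices of $\ell_2$, with gap (number of $a$-edges along $\ell_2$ between consecutive elements) equal to $hq^{d_T(\bar u_1,\bar u_2)}$ if $u_2<u_1$, and equal to $hp^{d_T(\bar u_1,\bar u_2)}$ if $u_1<u_2$.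
   Context: $\mathrm{BS}(m,n)=\langle a,t\mid ta^mt^{-1}=a^n\rangle$; $\Upsilon_{m,n}$ is its Cayley graph for $\{a,t\}$ (edges $g\to gs$ oriented and labeled by $s$); $a$-lines and $t$-lines are the subgraphs spanned by left cosets of $\langle a\rangle$ and $\langle t\rangle$. $\Lambda_{m,n}$ has one vertex per $a$-line or $t$-line (of type $a$ or $t$ respectively), adjacent when the lines intersect. $T$ is the Bass–Serre tree: its vertices are the $a$-lines (identified with type-$a$ vertices of $\Lambda_{m,n}$), with one edge, oriented from $\ell$ to $\ell'$, for each pair of $a$-lines $(\ell,\ell')$ such that $gt\in\ell'$ for some $g\in\ell$. Partial order on vertices of $T$ (hence on type-$a$ vertices): $v_1\le v_2$ if every edge on the geodesic from $v_1$ to $v_2$ is oriented from $v_1$ toward $v_2$; $u<u'$ means $u\le u'$ and $u\ne u'$. $d_T$ is the combinatorial distance in $T$. *)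

theory Defs
  imports Main
begin

text \<open>Words over the generators a, t and their inverses. A letter is a pair
(generator, is_inverse).\<close>

datatype gen = GA | GT

type_synonym word = "(gen \<times> bool) list"

definition gpow :: "gen \<Rightarrow> int \<Rightarrow> word" where
  "gpow s k = (if k \<ge> 0 then replicate (nat k) (s, False) else replicate (nat (- k)) (s, True))"

abbreviation apow :: "int \<Rightarrow> word" where "apow k \<equiv> gpow GA k"
abbreviation tpow :: "int \<Rightarrow> word" where "tpow k \<equiv> gpow GT k"

text \<open>Equality in BS(m,n) = <a,t | t a^m t^-1 = a^n>: the congruence on words
generated by free cancellation and the defining relator.\<close>

inductive bs_eq :: "int \<Rightarrow> int \<Rightarrow> word \<Rightarrow> word \<Rightarrow> bool" for m n where
  refl: "bs_eq m n w w"
| sym: "bs_eq m n v w \<Longrightarrow> bs_eq m n w v"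
| trans: "bs_eq m n u v \<Longrightarrow> bs_eq m n v w \<Longrightarrow> bs_eq m n u w"
| ctx: "bs_eq m n v w \<Longrightarrow> bs_eq m n (x @ v @ y) (x @ w @ y)"
| cancel: "bs_eq m n [(s, b), (s, \<not> b)] []"
| rel: "bs_eq m n ([(GT, False)] @ apow m @ [(GT, True)]) (apow n)"

text \<open>A group element (vertex of the Cayley graph) is represented by the set of
all words representing it.\<close>

definition elt :: "int \<Rightarrow> int \<Rightarrow> word \<Rightarrow> word set" where
  "elt m n g = {w. bs_eq m n g w}"

text \<open>a-lines and t-lines: left cosets g<a>, g<t>, as sets of words (unions of
group elements). Two lines intersect iff these sets intersect.\<close>

definition aline :: "int \<Rightarrow> int \<Rightarrow> word \<Rightarrow> word set" where
  "aline m n g = {w. \<exists>k::int. bs_eq m n (g @ apow k) w}"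

definition tline :: "int \<Rightarrow> int \<Rightarrow> word \<Rightarrow> word set" where
  "tline m n g = {w. \<exists>k::int. bs_eq m n (g @ tpow k) w}"

definition alines :: "int \<Rightarrow> int \<Rightarrow> word set set" where
  "alines m n = range (aline m n)"

definition tlines :: "int \<Rightarrow> int \<Rightarrow> word set set" where
  "tlines m n = range (tline m n)"

text \<open>Bass--Serre tree: vertices are a-lines; an edge oriented from L to L'
iff g t \<in> L' for some g \<in> L.\<close>

definition bs_edge :: "int \<Rightarrow> int \<Rightarrow> word set \<Rightarrow> word set \<Rightarrow> bool" where
  "bs_edge m n L L' \<longleftrightarrow> L \<in> alines m n \<and> L' \<in> alines m n \<and>
     (\<exists>g \<in> L. g @ [(GT, False)] \<in> L')"

definition bs_adj :: "int \<Rightarrow> int \<Rightarrow> word set \<Rightarrow> word set \<Rightarrow> bool" where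
  "bs_adj m n L L' \<longleftrightarrow> bs_edge m n L L' \<or> bs_edge m n L' L"

text \<open>A path in T from L to L' (as list of vertices); its length is the number
of edges, i.e. length xs - 1.\<close>

definition bs_path :: "int \<Rightarrow> int \<Rightarrow> word set list \<Rightarrow> word set \<Rightarrow> word set \<Rightarrow> bool" where
  "bs_path m n xs L L' \<longleftrightarrow> xs \<noteq> [] \<and> hd xs = L \<and> last xs = L' \<and>
     set xs \<subseteq> alines m n \<and>
     (\<forall>i. Suc i < length xs \<longrightarrow> bs_adj m n (xs ! i) (xs ! Suc i))"

definition bs_dist :: "int \<Rightarrow> int \<Rightarrow> word set \<Rightarrow> word set \<Rightarrow> nat" where
  "bs_dist m n L L' = (LEAST k. \<exists>xs. bs_path m n xs L L' \<and> length xs = Suc k)"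

definition bs_geodesic :: "int \<Rightarrow> int \<Rightarrow> word set list \<Rightarrow> word set \<Rightarrow> word set \<Rightarrow> bool" where
  "bs_geodesic m n xs L L' \<longleftrightarrow> bs_path m n xs L L' \<and> length xs = Suc (bs_dist m n L L')"

definition bs_le :: "int \<Rightarrow> int \<Rightarrow> word set \<Rightarrow> word set \<Rightarrow> bool" where
  "bs_le m n L L' \<longleftrightarrow> L \<in> alines m n \<and> L' \<in> alines m n \<and>
     (\<forall>xs. bs_geodesic m n xs L L' \<longrightarrow>
        (\<forall>i. Suc i < length xs \<longrightarrow> bs_edge m n (xs ! i) (xs ! Suc i)))"

definition bs_less :: "int \<Rightarrow> int \<Rightarrow> word set \<Rightarrow> word set \<Rightarrow> bool" where
  "bs_less m n L L' \<longleftrightarrow> bs_le m n L L' \<and> L \<noteq> L'"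

end

theory Submission
  imports Defs
begin

(* Let a t-line meet the a-lines aline (c t^J) and aline c, where c lies on the second one. It
   crosses aline c at some c a^s and then aline (c t^J) at c a^s t^J, so the points it cuts out
   on aline c are exactly the c a^s with a^s t^J in t^J <a>, i.e. with a^s fixing the vertex
   t^J <a> of the Bass-Serre tree. For J = d > 0 the relation a^(n k) t = t a^(m k) shows that
   a^(h q^d) fixes it; conversely, letting the group act on normal forms of the left cosets of
   <a>, one sees that a^s moves it unless h q^d divides s. The case J < 0 reduces to this one
   through the isomorphism BS(m,n) -> BS(n,m) inverting t. Finally, the t-exponent sum is
   constant on a-lines and changes by one along every edge of the tree, so the path along the
   t-line is a geodesic of length |J|, and its first edge points away from aline c iff J > 0. *)

definition bs_gap :: "int \<Rightarrow> int \<Rightarrow> nat \<Rightarrow> int" where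
  "bs_gap m n d = gcd m n * (\<bar>n\<bar> div gcd m n) ^ d"

lemma bs_gap_1: "bs_gap m n 1 = \<bar>n\<bar>"
  by (simp add: bs_gap_def)

lemma abs_dvd_bs_gap: "\<bar>n\<bar> dvd bs_gap m n (Suc d)"
proof -
  have "bs_gap m n (Suc d) = bs_gap m n 1 * (\<bar>n\<bar> div gcd m n) ^ d"
    by (simp add: bs_gap_def)
  then show ?thesis using bs_gap_1[of m n] by simp
qed

lemma bs_gap_dvd_mult_iff:
  fixes m n c :: int
  assumes "n \<noteq> 0"
  shows "bs_gap m n (Suc d) dvd m * c \<longleftrightarrow> bs_gap m n (Suc (Suc d)) dvd n * c"
proof -
  define h p q where "h = gcd m n" and "p = \<bar>m\<bar> div h" and "q = \<bar>n\<bar> div h"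
  have "h > 0" using assms by (simp add: h_def)
  have m: "\<bar>m\<bar> = h * p" and n: "\<bar>n\<bar> = h * q" by (simp_all add: h_def p_def q_def)
  have "q \<noteq> 0" using assms n by auto
  have "coprime (q ^ Suc d) p"
    using div_gcd_coprime[of "\<bar>n\<bar>" "\<bar>m\<bar>"] assms by (simp add: h_def p_def q_def gcd.commute)
  have "h * q ^ Suc d dvd m * c \<longleftrightarrow> h * q ^ Suc d dvd h * (p * \<bar>c\<bar>)"
    by (metis m abs_mult dvd_abs_iff mult.assoc)
  also have "\<dots> \<longleftrightarrow> q ^ Suc d dvd \<bar>c\<bar>"
    using \<open>h > 0\<close> \<open>coprime (q ^ Suc d) p\<close> by (simp add: coprime_dvd_mult_right_iff del: power_Suc)
  also have "\<dots> \<longleftrightarrow> (h * q) * q ^ Suc d dvd (h * q) * \<bar>c\<bar>"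
    using \<open>h > 0\<close> \<open>q \<noteq> 0\<close> by simp
  also have "\<dots> \<longleftrightarrow> h * q ^ Suc (Suc d) dvd n * c"
    by (metis n abs_mult dvd_abs_iff mult.assoc mult.commute power_Suc)
  finally show ?thesis by (simp add: bs_gap_def h_def q_def)
qed

lemma div_mod_add_carry: "(a mod M + k) div M + a div M = (a + k) div (M :: int)"
proof (cases "M = 0")
  case False
  have "a + k = (a mod M + k) + a div M * M"
    using mod_div_mult_eq[of a M] by simp
  then show ?thesis
    using div_mult_self1[OF False, of "a mod M + k" "a div M"] by simp
qed simp

lemma gpow_0 [simp]: "gpow s 0 = []"
  by (simp add: gpow_def)

definition t_height :: "word \<Rightarrow> int" where
  "t_height w = sum_list (map (\<lambda>(s, b). if s = GT then (if b then -1 else 1) else 0) w)"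

lemma t_height_simps [simp]:
  "t_height [] = 0"
  "t_height (u @ v) = t_height u + t_height v"
  "t_height ((s, b) # w) = (if s = GT then (if b then -1 else 1) else 0) + t_height w"
  "t_height (apow k) = 0"
  "t_height (tpow k) = k"
  by (simp_all add: t_height_def gpow_def sum_list_replicate)

lemma t_height_bs_eq: "bs_eq m n v w \<Longrightarrow> t_height v = t_height w"
  by (induction rule: bs_eq.induct) auto

context
  fixes m n :: int
begin

abbreviation bs_equiv :: "word \<Rightarrow> word \<Rightarrow> bool" (infix "\<approx>" 50)
  where "v \<approx> w \<equiv> bs_eq m n v w"

lemmas [trans] = bs_eq.trans[of m n]

lemma bs_eq_append_left: "v \<approx> w \<Longrightarrow> u @ v \<approx> u @ w"
  using bs_eq.ctx[of m n v w u "[]"] by simp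

lemma bs_eq_append_right: "v \<approx> w \<Longrightarrow> v @ u \<approx> w @ u"
  using bs_eq.ctx[of m n v w "[]" u] by simp

lemma bs_eq_cancel_inner: "u @ [(s, b), (s, \<not> b)] @ v \<approx> u @ v"
  using bs_eq.ctx[OF bs_eq.cancel, of m n u s b v] by simp

lemma bs_eq_cancel_inner': "u @ [(s, \<not> b), (s, b)] @ v \<approx> u @ v"
  using bs_eq_cancel_inner[of u s "\<not> b" v] by simp

fun word_inv :: "word \<Rightarrow> word" where
  "word_inv [] = []"
| "word_inv ((s, b) # w) = word_inv w @ [(s, \<not> b)]"

lemma word_inv_append: "word_inv w @ w \<approx> []"
proof (induction w)
  case Nil
  show ?case by (simp add: bs_eq.refl)
next
  case (Cons x w)
  obtain s b where "x = (s, b)" by force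
  then have "word_inv (x # w) @ x # w \<approx> word_inv w @ w"
    using bs_eq_cancel_inner'[of "word_inv w" s b w] by simp
  then show ?case using Cons.IH by (rule bs_eq.trans)
qed

lemma bs_eq_cancel_left:
  assumes "u @ v \<approx> u @ w"
  shows "v \<approx> w"
proof -
  have "v \<approx> (word_inv u @ u) @ v"
    using bs_eq_append_right[OF bs_eq.sym[OF word_inv_append[of u]], of v] by simp
  also have "\<dots> \<approx> (word_inv u @ u) @ w"
    using bs_eq_append_left[OF assms, of "word_inv u"] by simp
  also have "\<dots> \<approx> w"
    using bs_eq_append_right[OF word_inv_append[of u], of w] by simp
  finally show ?thesis .
qed

lemma replicate_cancel:
  "replicate i (s, b) @ replicate j (s, \<not> b) \<approx> replicate (i - j) (s, b) @ replicate (j - i) (s, \<not> b)"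
proof (induction i arbitrary: j)
  case 0
  show ?case by (simp add: bs_eq.refl)
next
  case (Suc i)
  show ?case
  proof (cases j)
    case 0
    then show ?thesis by (simp add: bs_eq.refl)
  next
    case (Suc j')
    have "replicate (Suc i) (s, b) @ replicate j (s, \<not> b)
        = replicate i (s, b) @ [(s, b), (s, \<not> b)] @ replicate j' (s, \<not> b)"
      by (simp add: Suc replicate_append_same[symmetric])
    also have "\<dots> \<approx> replicate i (s, b) @ replicate j' (s, \<not> b)"
      by (rule bs_eq_cancel_inner)
    also have "\<dots> \<approx> replicate (Suc i - j) (s, b) @ replicate (j - Suc i) (s, \<not> b)"
      using Suc.IH[of j'] by (simp add: Suc)
    finally show ?thesis .
  qed
qed

lemma gpow_add: "gpow s i @ gpow s j \<approx> gpow s (i + j)"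
proof -
  consider "i \<ge> 0" "j \<ge> 0" | "i \<ge> 0" "j < 0" | "i < 0" "j \<ge> 0" | "i < 0" "j < 0"
    by linarith
  then show ?thesis
  proof cases
    case 1
    then show ?thesis by (simp add: gpow_def replicate_add[symmetric] nat_add_distrib bs_eq.refl)
  next
    case 2
    then have "replicate (nat i - nat (- j)) (s, False) @ replicate (nat (- j) - nat i) (s, \<not> False)
        = gpow s (i + j)"
      by (auto simp: gpow_def nat_diff_distrib')
    with 2 show ?thesis using replicate_cancel[of "nat i" s False "nat (- j)"] by (simp add: gpow_def)
  next
    case 3
    then have "replicate (nat (- i) - nat j) (s, True) @ replicate (nat j - nat (- i)) (s, \<not> True)
        = gpow s (i + j)"
      by (auto simp: gpow_def nat_diff_distrib')
    with 3 show ?thesis using replicate_cancel[of "nat (- i)" s True "nat j"] by (simp add: gpow_def)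
  next
    case 4
    then have "nat (- i) + nat (- j) = nat (- (i + j))" by simp
    with 4 show ?thesis by (simp add: gpow_def replicate_add[symmetric] bs_eq.refl)
  qed
qed

lemma apow_t_commute: "apow n @ [(GT, False)] \<approx> [(GT, False)] @ apow m"
proof -
  have "apow n @ [(GT, False)] \<approx> ([(GT, False)] @ apow m) @ [(GT, True), (GT, False)] @ []"
    using bs_eq_append_right[OF bs_eq.sym[OF bs_eq.rel], of "[(GT, False)]"] by simp
  also have "\<dots> \<approx> [(GT, False)] @ apow m"
    using bs_eq_cancel_inner'[of "[(GT, False)] @ apow m" GT False "[]"] by simp
  finally show ?thesis .
qed

lemma tinv_apow_t: "[(GT, True)] @ apow n @ [(GT, False)] \<approx> apow m"
proof -
  have "[(GT, True)] @ apow n @ [(GT, False)] \<approx> [] @ [(GT, True), (GT, False)] @ apow m"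
    using bs_eq_append_left[OF apow_t_commute, of "[(GT, True)]"] by simp
  also have "\<dots> \<approx> apow m"
    using bs_eq_cancel_inner'[of "[]" GT False] by simp
  finally show ?thesis .
qed

lemma apow_mult_commute:
  assumes "apow x @ w \<approx> w @ apow y"
  shows "apow (x * k) @ w \<approx> w @ apow (y * k)"
proof (induction k rule: int_induct[of _ 0])
  case base
  show ?case by (simp add: bs_eq.refl)
next
  case (step1 i)
  have "apow (x * (i + 1)) @ w \<approx> apow x @ apow (x * i) @ w"
    using bs_eq_append_right[OF bs_eq.sym[OF gpow_add[of GA x "x * i"]], of w]
    by (simp add: algebra_simps)
  also have "\<dots> \<approx> (apow x @ w) @ apow (y * i)"
    using bs_eq_append_left[OF step1(2)] by simp
  also have "\<dots> \<approx> w @ apow y @ apow (y * i)"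
    using bs_eq_append_right[OF assms] by simp
  also have "\<dots> \<approx> w @ apow (y * (i + 1))"
    using bs_eq_append_left[OF gpow_add[of GA y "y * i"]] by (simp add: algebra_simps)
  finally show ?case .
next
  case (step2 i)
  have "apow x @ apow (x * (i - 1)) @ w \<approx> apow (x * i) @ w"
    using bs_eq_append_right[OF gpow_add[of GA x "x * (i - 1)"], of w] by (simp add: algebra_simps)
  also have "\<dots> \<approx> w @ apow (y * i)"
    by (rule step2(2))
  also have "\<dots> \<approx> (w @ apow y) @ apow (y * (i - 1))"
    using bs_eq_append_left[OF bs_eq.sym[OF gpow_add[of GA y "y * (i - 1)"]], of w]
    by (simp add: algebra_simps)
  also have "\<dots> \<approx> apow x @ w @ apow (y * (i - 1))"
    using bs_eq_append_right[OF bs_eq.sym[OF assms]] by simp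
  finally show ?case by (rule bs_eq_cancel_left)
qed

lemma apow_t_replicate_commute_if_dvd:
  assumes "n \<noteq> 0"
  shows "bs_gap m n (Suc d) dvd s \<Longrightarrow>
    \<exists>r. apow s @ replicate (Suc d) (GT, False) \<approx> replicate (Suc d) (GT, False) @ apow r"
proof (induction d arbitrary: s)
  case 0
  then have "n dvd s"
    using bs_gap_1[of m n] by simp
  then obtain c where "s = n * c" ..
  then show ?case
    using apow_mult_commute[OF apow_t_commute, of c] by (auto simp: mult.commute)
next
  case (Suc d)
  have "n dvd s"
    using dvd_trans[OF abs_dvd_bs_gap Suc.prems] by simp
  then obtain c where s: "s = n * c" ..
  then have "bs_gap m n (Suc d) dvd m * c"
    using Suc.prems bs_gap_dvd_mult_iff[OF assms] by simp
  then obtain r where r: "apow (m * c) @ replicate (Suc d) (GT, False) \<approx> replicate (Suc d) (GT, False) @ apow r"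
    using Suc.IH by blast
  have "apow s @ replicate (Suc (Suc d)) (GT, False)
      = (apow (n * c) @ [(GT, False)]) @ replicate (Suc d) (GT, False)"
    by (simp add: s)
  also have "\<dots> \<approx> [(GT, False)] @ apow (m * c) @ replicate (Suc d) (GT, False)"
    using bs_eq_append_right[OF apow_mult_commute[OF apow_t_commute]] by simp
  also have "\<dots> \<approx> [(GT, False)] @ replicate (Suc d) (GT, False) @ apow r"
    using bs_eq_append_left[OF r] .
  finally show ?case
    by (metis append_Cons append_Nil replicate_Suc)
qed

(* A left coset g <a>, i.e. a vertex of the Bass-Serre tree, is encoded by its normal form
   a^r1 t^e1 a^r2 t^e2 ... <a>: an entry (True, r) stands for a^r t^-1 with r reduced mod m, an
   entry (False, r) for a^r t with r reduced mod n, and no t^e a^0 t^-e occurs. Left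
   multiplication by a^k adds k to r1 and carries a^(m c) past t^-1 as a^(n c), resp. a^(n c)
   past t as a^(m c). *)
type_synonym coset = "(bool \<times> int) list"

fun a_shift :: "int \<Rightarrow> coset \<Rightarrow> coset" where
  "a_shift k [] = []"
| "a_shift k ((b, r) # x) =
    (if b then (True, (r + k) mod m) # a_shift (n * ((r + k) div m)) x
     else (False, (r + k) mod n) # a_shift (m * ((r + k) div n)) x)"

definition t_mult :: "coset \<Rightarrow> coset" where
  "t_mult x = (if x \<noteq> [] \<and> hd x = (True, 0) then tl x else (False, 0) # x)"

definition tinv_mult :: "coset \<Rightarrow> coset" where
  "tinv_mult x = (if x \<noteq> [] \<and> hd x = (False, 0) then tl x else (True, 0) # x)"

fun reduced :: "coset \<Rightarrow> bool" where
  "reduced [] = True"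
| "reduced ((b, r) # x) = (r mod (if b then m else n) = r \<and> reduced x \<and> (x = [] \<or> hd x \<noteq> (\<not> b, 0)))"

fun letter_act :: "gen \<times> bool \<Rightarrow> coset \<Rightarrow> coset" where
  "letter_act (GA, b) = a_shift (if b then -1 else 1)"
| "letter_act (GT, b) = (if b then tinv_mult else t_mult)"

definition word_act :: "word \<Rightarrow> coset \<Rightarrow> coset" where
  "word_act w = foldr letter_act w"

lemma word_act_simps [simp]:
  "word_act [] x = x"
  "word_act (l # w) x = letter_act l (word_act w x)"
  "word_act (u @ v) x = word_act u (word_act v x)"
  by (simp_all add: word_act_def)

lemma a_shift_add: "a_shift k (a_shift l x) = a_shift (k + l) x"
proof (induction x arbitrary: k l)
  case Nil
  show ?case by simp
next
  case (Cons y x)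
  have rem: "((r + l) mod M + k) mod M = (r + (k + l)) mod M" for r M :: int
    using mod_add_left_eq[of "r + l" M k] by (simp add: ac_simps)
  have carry: "c * (((r + l) mod M + k) div M) + c * ((r + l) div M) = c * ((r + (k + l)) div M)"
    for r c M :: int
    using div_mod_add_carry[of "r + l" M k] by (simp add: ac_simps flip: distrib_left)
  obtain b r where "y = (b, r)" by force
  then show ?case
    by (simp add: Cons.IH carry rem)
qed

lemma a_shift_0: "reduced x \<Longrightarrow> a_shift 0 x = x"
proof (induction x)
  case (Cons y x)
  obtain b r where y: "y = (b, r)" by force
  have "r div M = 0" if "r mod M = r" for M :: int
    using that mod_div_mult_eq[of r M] by (cases "M = 0") auto
  with Cons y show ?case by auto
qed simp

lemma reduced_a_shift: "reduced x \<Longrightarrow> reduced (a_shift k x)"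
proof (induction x arbitrary: k)
  case (Cons y x)
  obtain b r where y: "y = (b, r)" by force
  define k' where "k' = (if b then n else m) * ((r + k) div (if b then m else n))"
  have "a_shift k' x = [] \<or> hd (a_shift k' x) \<noteq> (\<not> b, 0)"
  proof (cases x)
    case (Cons z x')
    obtain b' r' where z: "z = (b', r')" by force
    have "r' \<noteq> 0 \<and> r' mod (if b' then m else n) = r'" if "b' = (\<not> b)"
      using Cons.prems y Cons z that by auto
    then show ?thesis
      using Cons z by (cases b; cases b') (auto simp: k'_def)
  qed simp
  with Cons y show ?case
    by (auto simp: k'_def)
qed simp

lemma reduced_t_mult: "reduced x \<Longrightarrow> reduced (t_mult x)"
  by (cases x) (auto simp: t_mult_def)

lemma reduced_tinv_mult: "reduced x \<Longrightarrow> reduced (tinv_mult x)"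
  by (cases x) (auto simp: tinv_mult_def)

lemma t_mult_tinv_mult: "reduced x \<Longrightarrow> t_mult (tinv_mult x) = x"
  by (cases x) (auto simp: t_mult_def tinv_mult_def)

lemma tinv_mult_t_mult: "reduced x \<Longrightarrow> tinv_mult (t_mult x) = x"
  by (cases x) (auto simp: t_mult_def tinv_mult_def)

lemma reduced_word_act: "reduced x \<Longrightarrow> reduced (word_act w x)"
proof (induction w)
  case (Cons l w)
  obtain s b where "l = (s, b)" by force
  with Cons show ?case
    by (cases s) (auto intro: reduced_a_shift reduced_t_mult reduced_tinv_mult)
qed simp

lemma word_act_apow: "reduced x \<Longrightarrow> word_act (apow k) x = a_shift k x"
proof -
  assume x: "reduced x"
  have "word_act (replicate j (GA, b)) x = a_shift (if b then - int j else int j) x" for j b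
    by (induction j) (auto simp: a_shift_0[OF x] a_shift_add algebra_simps)
  then show ?thesis
    by (simp add: gpow_def)
qed

lemma word_act_t_replicate: "word_act (replicate d (GT, False)) [] = replicate d (False, 0)"
  by (induction d) (auto simp: t_mult_def)

context
  assumes m_nonzero: "m \<noteq> 0" and n_nonzero: "n \<noteq> 0"
begin

lemma t_mult_relator: "reduced x \<Longrightarrow> t_mult (a_shift m (tinv_mult x)) = a_shift n x"
proof (cases "x \<noteq> [] \<and> hd x = (False, 0)")
  case True
  assume x: "reduced x"
  then obtain y where y: "x = (False, 0) # y" "reduced y" "y = [] \<or> hd y \<noteq> (True, 0)"
    using True by (cases x) auto
  have "a_shift m y = [] \<or> hd (a_shift m y) \<noteq> (True, 0)"
  proof (cases y)
    case (Cons z y')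
    obtain b r where "z = (b, r)" by force
    with y Cons show ?thesis
      by (cases b) auto
  qed simp
  then show ?thesis
    using y n_nonzero by (auto simp: t_mult_def tinv_mult_def)
next
  case False
  then show ?thesis
    using m_nonzero by (auto simp: t_mult_def tinv_mult_def)
qed

lemma word_act_bs_eq: "v \<approx> w \<Longrightarrow> reduced x \<Longrightarrow> word_act v x = word_act w x"
proof (induction arbitrary: x rule: bs_eq.induct)
  case (ctx v w u u')
  then show ?case
    using reduced_word_act by simp
next
  case (cancel s b)
  then show ?case
    by (cases s) (auto simp: a_shift_add a_shift_0 t_mult_tinv_mult tinv_mult_t_mult)
next
  case rel
  then show ?case
    by (simp add: word_act_apow reduced_tinv_mult t_mult_relator)
qed simp_all

lemma a_shift_fixes_t_replicate_iff:
  "a_shift k (replicate (Suc d) (False, 0)) = replicate (Suc d) (False, 0) \<longleftrightarrow> bs_gap m n (Suc d) dvd k"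
proof (induction d arbitrary: k)
  case 0
  show ?case
    using bs_gap_1[of m n] by (simp add: mod_eq_0_iff_dvd)
next
  case (Suc d)
  have "a_shift k (replicate (Suc (Suc d)) (False, 0)) = replicate (Suc (Suc d)) (False, 0) \<longleftrightarrow>
      k mod n = 0 \<and> a_shift (m * (k div n)) (replicate (Suc d) (False, 0)) = replicate (Suc d) (False, 0)"
    unfolding replicate_Suc[of "Suc d"] by simp
  also have "\<dots> \<longleftrightarrow> n dvd k \<and> bs_gap m n (Suc d) dvd m * (k div n)"
    using Suc.IH[of "m * (k div n)"] mod_eq_0_iff_dvd by blast
  also have "\<dots> \<longleftrightarrow> bs_gap m n (Suc (Suc d)) dvd k"
  proof (cases "n dvd k")
    case True
    then obtain c where "k = n * c" ..
    then show ?thesis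
      using bs_gap_dvd_mult_iff[OF n_nonzero, where d = d and m = m and c = c] n_nonzero by simp
  next
    case False
    then show ?thesis
      using dvd_trans[OF abs_dvd_bs_gap[of n m "Suc d"]] by auto
  qed
  finally show ?case .
qed

lemma apow_tpow_commute_iff:
  assumes "0 < J"
  shows "(\<exists>r. apow s @ tpow J \<approx> tpow J @ apow r) \<longleftrightarrow> bs_gap m n (nat J) dvd s"
proof -
  obtain d where d: "nat J = Suc d"
    using assms by (metis gr0_implies_Suc zero_less_nat_eq)
  then have tpow: "tpow J = replicate (Suc d) (GT, False)"
    using assms by (simp add: gpow_def)
  have vertex: "word_act (replicate (Suc d) (GT, False)) [] = replicate (Suc d) (False, 0)"
    by (rule word_act_t_replicate)
  have "reduced (replicate (Suc d) (False, 0))"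
    using reduced_word_act[of "[]" "replicate (Suc d) (GT, False)"] unfolding vertex by simp
  have "bs_gap m n (Suc d) dvd s"
    if "apow s @ replicate (Suc d) (GT, False) \<approx> replicate (Suc d) (GT, False) @ apow r" for r
  proof -
    have "a_shift s (replicate (Suc d) (False, 0)) = word_act (apow s @ replicate (Suc d) (GT, False)) []"
      using vertex \<open>reduced (replicate (Suc d) (False, 0))\<close>
      by (simp add: word_act_apow del: replicate_Suc)
    also have "\<dots> = word_act (replicate (Suc d) (GT, False) @ apow r) []"
      using word_act_bs_eq[OF that] by simp
    also have "\<dots> = replicate (Suc d) (False, 0)"
      using vertex by (simp add: word_act_apow del: replicate_Suc)
    finally show ?thesis
      using a_shift_fixes_t_replicate_iff by simp
  qed
  then show ?thesis
    unfolding tpow d using apow_t_replicate_commute_if_dvd[OF n_nonzero] by blast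
qed

end

lemma aline_self: "x \<in> aline m n x"
  unfolding aline_def using bs_eq.refl[of m n x] by (metis append_Nil2 gpow_0 mem_Collect_eq)

lemma tline_self: "x \<in> tline m n x"
  unfolding tline_def using bs_eq.refl[of m n x] by (metis append_Nil2 gpow_0 mem_Collect_eq)

lemma aline_bs_eq_closed: "w \<in> aline m n x \<Longrightarrow> w \<approx> w' \<Longrightarrow> w' \<in> aline m n x"
  unfolding aline_def by (auto intro: bs_eq.trans)

lemma tline_bs_eq_closed: "w \<in> tline m n x \<Longrightarrow> w \<approx> w' \<Longrightarrow> w' \<in> tline m n x"
  unfolding tline_def by (auto intro: bs_eq.trans)

lemma t_height_aline: "w \<in> aline m n x \<Longrightarrow> t_height w = t_height x"
  unfolding aline_def by (auto dest: t_height_bs_eq)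

lemma aline_cong: "x \<approx> y \<Longrightarrow> aline m n x = aline m n y"
  unfolding aline_def by (meson bs_eq.sym bs_eq.trans bs_eq_append_right)

lemma aline_append_apow: "aline m n (x @ apow i) = aline m n x"
proof -
  have "x @ apow i @ apow k \<approx> x @ apow (i + k)" for k
    by (rule bs_eq_append_left[OF gpow_add])
  moreover have "(x @ apow i) @ apow (k - i) \<approx> x @ apow k" for k
    using bs_eq_append_left[OF gpow_add[of GA i "k - i"], of x] by simp
  ultimately show ?thesis
    unfolding aline_def by (auto intro: bs_eq.trans dest: bs_eq.sym)
qed

lemma aline_eq_of_mem:
  assumes "y \<in> aline m n x"
  shows "aline m n y = aline m n x"
proof -
  obtain k where "x @ apow k \<approx> y"
    using assms unfolding aline_def by blast
  then show ?thesis
    using aline_cong aline_append_apow by metis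
qed

lemma elt_cong:
  assumes "x \<approx> y"
  shows "elt m n x = elt m n y"
proof -
  have "x \<approx> w \<longleftrightarrow> y \<approx> w" for w
    using assms bs_eq.sym bs_eq.trans by meson
  then show ?thesis
    unfolding elt_def by auto
qed

lemma tline_link:
  assumes "y1 \<in> tline m n z" and "y2 \<in> tline m n z"
  shows "y2 @ tpow (t_height y1 - t_height y2) \<approx> y1"
proof -
  obtain j1 j2 where j1: "z @ tpow j1 \<approx> y1" and j2: "z @ tpow j2 \<approx> y2"
    using assms unfolding tline_def by blast
  have "t_height y1 - t_height y2 = j1 - j2"
    using t_height_bs_eq[OF j1] t_height_bs_eq[OF j2] by simp
  then have "y2 @ tpow (t_height y1 - t_height y2) \<approx> z @ tpow j2 @ tpow (j1 - j2)"
    using bs_eq_append_right[OF bs_eq.sym[OF j2]] by simp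
  also have "\<dots> \<approx> z @ tpow j1"
    using bs_eq_append_left[OF gpow_add[of GT j2 "j1 - j2"]] by simp
  also note j1
  finally show ?thesis .
qed

lemma aline_inter_tline:
  assumes "y \<in> aline m n x" and "y \<in> tline m n z"
  shows "aline m n x \<inter> tline m n z = elt m n y"
proof
  show "aline m n x \<inter> tline m n z \<subseteq> elt m n y"
  proof
    fix w
    assume w: "w \<in> aline m n x \<inter> tline m n z"
    then have "t_height w = t_height y"
      using assms t_height_aline by auto
    then show "w \<in> elt m n y"
      using tline_link[of w z y] w assms(2) unfolding elt_def by simp
  qed
  show "elt m n y \<subseteq> aline m n x \<inter> tline m n z"
    unfolding elt_def using assms aline_bs_eq_closed tline_bs_eq_closed by blast
qed

definition line_height :: "word set \<Rightarrow> int" where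
  "line_height L = t_height (SOME w. w \<in> L)"

lemma line_height_aline: "line_height (aline m n x) = t_height x"
  unfolding line_height_def by (rule t_height_aline[OF someI[of "\<lambda>w. w \<in> aline m n x", OF aline_self]])

lemma line_height_edge: "bs_edge m n L L' \<Longrightarrow> line_height L' = line_height L + 1"
  unfolding bs_edge_def alines_def
  by (auto simp: line_height_aline dest!: t_height_aline)

lemma line_height_adj: "bs_adj m n L L' \<Longrightarrow> \<bar>line_height L' - line_height L\<bar> = 1"
  unfolding bs_adj_def using line_height_edge by fastforce

lemma line_height_path:
  assumes "bs_path m n xs L L'"
  shows "\<bar>line_height L' - line_height L\<bar> \<le> int (length xs) - 1"
proof -
  have bound: "\<bar>line_height (xs ! i) - line_height (xs ! 0)\<bar> \<le> int i" if "i < length xs" for i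
    using that
  proof (induction i)
    case (Suc i)
    then have "\<bar>line_height (xs ! Suc i) - line_height (xs ! i)\<bar> = 1"
      using assms line_height_adj unfolding bs_path_def by blast
    with Suc show ?case by simp
  qed simp
  have "xs \<noteq> []" "L = xs ! 0" "L' = xs ! (length xs - 1)"
    using assms unfolding bs_path_def by (auto simp: hd_conv_nth last_conv_nth)
  with bound[of "length xs - 1"] show ?thesis
    by (simp add: Suc_le_eq)
qed

lemma aline_tpow_edge: "bs_edge m n (aline m n (c @ tpow k)) (aline m n (c @ tpow (k + 1)))"
proof -
  have "tpow 1 = [(GT, False)]"
    by (simp add: gpow_def)
  then have "c @ tpow (k + 1) \<approx> (c @ tpow k) @ [(GT, False)]"
    using bs_eq_append_left[OF bs_eq.sym[OF gpow_add[of GT k 1]], of c] by simp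
  then have "(c @ tpow k) @ [(GT, False)] \<in> aline m n (c @ tpow (k + 1))"
    by (rule aline_bs_eq_closed[OF aline_self])
  then show ?thesis
    unfolding bs_edge_def alines_def using aline_self by blast
qed

definition tline_path :: "word \<Rightarrow> int \<Rightarrow> word set list" where
  "tline_path c J = map (\<lambda>i. aline m n (c @ tpow (sgn J * int i))) [0..<Suc (nat \<bar>J\<bar>)]"

lemma tline_path_nth: "i \<le> nat \<bar>J\<bar> \<Longrightarrow> tline_path c J ! i = aline m n (c @ tpow (sgn J * int i))"
  unfolding tline_path_def by (simp del: upt_Suc add: nth_map_upt)

lemma length_tline_path: "length (tline_path c J) = Suc (nat \<bar>J\<bar>)"
  by (simp add: tline_path_def)

lemma bs_path_tline_path: "bs_path m n (tline_path c J) (aline m n c) (aline m n (c @ tpow J))"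
  unfolding bs_path_def
proof (intro conjI allI impI)
  show "tline_path c J \<noteq> []" "set (tline_path c J) \<subseteq> alines m n"
    by (auto simp: tline_path_def alines_def)
  show "hd (tline_path c J) = aline m n c" "last (tline_path c J) = aline m n (c @ tpow J)"
    by (simp_all add: tline_path_def hd_map last_map sgn_mult_abs del: upt_Suc)
  fix i
  assume "Suc i < length (tline_path c J)"
  then have i: "Suc i \<le> nat \<bar>J\<bar>"
    by (simp add: length_tline_path)
  consider "0 < J" | "J < 0"
    using i by linarith
  then show "bs_adj m n (tline_path c J ! i) (tline_path c J ! Suc i)"
  proof cases
    case 1
    then show ?thesis
      using i aline_tpow_edge[of c "int i"] by (simp add: tline_path_nth bs_adj_def add.commute)
  next
    case 2
    have "bs_edge m n (aline m n (c @ tpow (- int (Suc i)))) (aline m n (c @ tpow (- int i)))"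
      using aline_tpow_edge[of c "- int (Suc i)"] by simp
    with 2 show ?thesis
      using i by (simp add: tline_path_nth bs_adj_def)
  qed
qed

lemma bs_dist_tpow: "bs_dist m n (aline m n c) (aline m n (c @ tpow J)) = nat \<bar>J\<bar>"
  unfolding bs_dist_def
proof (rule Least_equality)
  show "\<exists>xs. bs_path m n xs (aline m n c) (aline m n (c @ tpow J)) \<and> length xs = Suc (nat \<bar>J\<bar>)"
    using bs_path_tline_path length_tline_path by blast
  fix k
  assume "\<exists>xs. bs_path m n xs (aline m n c) (aline m n (c @ tpow J)) \<and> length xs = Suc k"
  then obtain xs where xs: "bs_path m n xs (aline m n c) (aline m n (c @ tpow J))" "length xs = Suc k"
    by blast
  show "nat \<bar>J\<bar> \<le> k"
    using line_height_path[OF xs(1)] xs(2) by (simp add: line_height_aline)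
qed

lemma aline_tpow_tpow_uminus: "aline m n (c @ tpow J @ tpow (- J)) = aline m n c"
  using aline_cong[OF bs_eq_append_left[OF gpow_add[of GT J "- J"], of c]] by simp

lemma bs_dist_tpow_sym: "bs_dist m n (aline m n (c @ tpow J)) (aline m n c) = nat \<bar>J\<bar>"
  using bs_dist_tpow[of "c @ tpow J" "- J"] by (simp add: aline_tpow_tpow_uminus)

lemma bs_less_tpow_pos:
  assumes "bs_less m n (aline m n c) (aline m n (c @ tpow J))"
  shows "0 < J"
proof (rule ccontr)
  assume "\<not> 0 < J"
  moreover have "J \<noteq> 0"
    using assms unfolding bs_less_def by (metis append_Nil2 gpow_0)
  ultimately have J: "J < 0" by simp
  have "bs_geodesic m n (tline_path c J) (aline m n c) (aline m n (c @ tpow J))"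
    unfolding bs_geodesic_def using bs_path_tline_path bs_dist_tpow length_tline_path by simp
  moreover have "Suc 0 < length (tline_path c J)"
    using J by (simp add: length_tline_path)
  ultimately have "bs_edge m n (tline_path c J ! 0) (tline_path c J ! Suc 0)"
    using assms unfolding bs_less_def bs_le_def by blast
  moreover have "tline_path c J ! 0 = aline m n c" "tline_path c J ! Suc 0 = aline m n (c @ tpow (- 1))"
    using J by (simp_all add: tline_path_nth)
  ultimately have "line_height (aline m n (c @ tpow (- 1))) = line_height (aline m n c) + 1"
    using line_height_edge by metis
  then show False
    by (simp add: line_height_aline)
qed

definition linked_points :: "word \<Rightarrow> word \<Rightarrow> word set set" where
  "linked_points g1 g2 =
    {aline m n g2 \<inter> L | L. L \<in> tlines m n \<and> L \<inter> aline m n g1 \<noteq> {} \<and> L \<inter> aline m n g2 \<noteq> {}}"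

lemma linked_points_tpow_subset:
  assumes "\<And>s r. apow s @ tpow J \<approx> tpow J @ apow r \<Longrightarrow> H dvd s"
  shows "linked_points (c @ tpow J) c \<subseteq> {elt m n (c @ apow (H * j)) | j. True}"
proof
  fix X
  assume "X \<in> linked_points (c @ tpow J) c"
  then obtain z z1 z2 where X: "X = aline m n c \<inter> tline m n z"
    and z1: "z1 \<in> tline m n z" "z1 \<in> aline m n (c @ tpow J)"
    and z2: "z2 \<in> tline m n z" "z2 \<in> aline m n c"
    unfolding linked_points_def tlines_def by blast
  obtain s where s: "c @ apow s \<approx> z2"
    using z2(2) unfolding aline_def by blast
  obtain r where r: "(c @ tpow J) @ apow r \<approx> z1"
    using z1(2) unfolding aline_def by blast
  have "t_height z1 - t_height z2 = J"
    using t_height_aline[OF z1(2)] t_height_aline[OF z2(2)] by simp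
  then have "z2 @ tpow J \<approx> z1"
    using tline_link[OF z1(1) z2(1)] by simp
  have "c @ apow s @ tpow J \<approx> z2 @ tpow J"
    using bs_eq_append_right[OF s] by simp
  also have "\<dots> \<approx> z1" by fact
  also have "\<dots> \<approx> c @ tpow J @ apow r"
    using bs_eq.sym[OF r] by simp
  finally have "apow s @ tpow J \<approx> tpow J @ apow r"
    by (rule bs_eq_cancel_left)
  then have "H dvd s"
    by (rule assms)
  then obtain j where "s = H * j" ..
  moreover have "X = elt m n z2"
    using X aline_inter_tline[OF z2(2) z2(1)] by simp
  ultimately show "X \<in> {elt m n (c @ apow (H * j)) | j. True}"
    using elt_cong[OF s] by blast
qed

lemma linked_points_tpow_supset:
  assumes "\<And>j. \<exists>r. apow (H * j) @ tpow J \<approx> tpow J @ apow r"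
  shows "{elt m n (c @ apow (H * j)) | j. True} \<subseteq> linked_points (c @ tpow J) c"
proof
  fix X
  assume "X \<in> {elt m n (c @ apow (H * j)) | j. True}"
  then obtain j where X: "X = elt m n (c @ apow (H * j))" by blast
  define z where "z = c @ apow (H * j)"
  from assms[of j] obtain r where "apow (H * j) @ tpow J \<approx> tpow J @ apow r" ..
  then have "(c @ tpow J) @ apow r \<approx> z @ tpow J"
    using bs_eq_append_left[OF bs_eq.sym, of _ _ c] by (simp add: z_def)
  then have "z @ tpow J \<in> tline m n z \<inter> aline m n (c @ tpow J)"
    unfolding tline_def aline_def using bs_eq.refl by blast
  moreover have z: "z \<in> aline m n c"
    unfolding aline_def z_def using bs_eq.refl by blast
  moreover have "X = aline m n c \<inter> tline m n z"
    using aline_inter_tline[OF z tline_self] X by (simp add: z_def)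
  ultimately show "X \<in> linked_points (c @ tpow J) c"
    unfolding linked_points_def tlines_def using tline_self[of z] by blast
qed

lemma linked_points_tpow:
  assumes "\<And>s. (\<exists>r. apow s @ tpow J \<approx> tpow J @ apow r) \<longleftrightarrow> H dvd s"
  shows "linked_points (c @ tpow J) c = {elt m n (c @ apow (H * j)) | j. True}"
proof (rule equalityI[OF linked_points_tpow_subset linked_points_tpow_supset])
  show "H dvd s" if "apow s @ tpow J \<approx> tpow J @ apow r" for s r
    using assms that by blast
  show "\<exists>r. apow (H * j) @ tpow J \<approx> tpow J @ apow r" for j
    using assms[of "H * j"] by simp
qed

lemma linked_points_tpow_pos:
  assumes "m \<noteq> 0" and "n \<noteq> 0" and "0 < J"
  shows "linked_points (c @ tpow J) c = {elt m n (c @ apow (bs_gap m n (nat J) * j)) | j. True}"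
  using linked_points_tpow apow_tpow_commute_iff[OF assms] by blast

lemma common_tline_link:
  assumes "\<exists>L \<in> tlines m n. L \<inter> aline m n g1 \<noteq> {} \<and> L \<inter> aline m n g2 \<noteq> {}"
  obtains c J where "c \<in> aline m n g2" and "aline m n g1 = aline m n (c @ tpow J)"
proof -
  obtain z y1 y2 where y1: "y1 \<in> tline m n z" "y1 \<in> aline m n g1"
    and y2: "y2 \<in> tline m n z" "y2 \<in> aline m n g2"
    using assms unfolding tlines_def by blast
  have "aline m n g1 = aline m n (y2 @ tpow (t_height y1 - t_height y2))"
    using aline_eq_of_mem[OF y1(2)] aline_cong[OF tline_link[OF y1(1) y2(1)]] by simp
  with y2(2) show ?thesis by (rule that)
qed

end

definition tflip :: "word \<Rightarrow> word" where
  "tflip = map (\<lambda>(s, b). (s, if s = GT then \<not> b else b))"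

lemma tflip_simps [simp]:
  "tflip [] = []"
  "tflip ((s, b) # w) = (s, if s = GT then \<not> b else b) # tflip w"
  "tflip (u @ v) = tflip u @ tflip v"
  "tflip (tflip w) = w"
  "tflip (apow k) = apow k"
  "tflip (tpow k) = tpow (- k)"
  by (auto simp: tflip_def gpow_def map_idI split: prod.splits)

lemma bs_eq_tflip: "bs_eq m n v w \<Longrightarrow> bs_eq n m (tflip v) (tflip w)"
proof (induction rule: bs_eq.induct)
  case (ctx v w x y)
  then show ?case
    using bs_eq.ctx by simp
next
  case (cancel s b)
  show ?case
    using bs_eq.cancel[of n m s b] bs_eq.cancel[of n m s "\<not> b"] by (cases s) simp_all
next
  case rel
  show ?case
    using tinv_apow_t[of n m] by simp
qed (auto intro: bs_eq.intros)

lemma apow_tpow_neg_commute_iff: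
  assumes "m \<noteq> 0" and "n \<noteq> 0" and "J < 0"
  shows "(\<exists>r. bs_eq m n (apow s @ tpow J) (tpow J @ apow r)) \<longleftrightarrow> bs_gap n m (nat (- J)) dvd s"
proof -
  have "bs_eq m n (apow s @ tpow J) (tpow J @ apow r) \<longleftrightarrow>
      bs_eq n m (apow s @ tpow (- J)) (tpow (- J) @ apow r)" for r
    using bs_eq_tflip[of m n] bs_eq_tflip[of n m "apow s @ tpow (- J)" "tpow (- J) @ apow r"]
    by fastforce
  then show ?thesis
    using apow_tpow_commute_iff[of n m "- J" s] assms by simp
qed

lemma linked_points_tpow_neg:
  assumes "m \<noteq> 0" and "n \<noteq> 0" and "J < 0"
  shows "linked_points m n (c @ tpow J) c = {elt m n (c @ apow (bs_gap n m (nat (- J)) * j)) | j. True}"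
  using linked_points_tpow apow_tpow_neg_commute_iff[OF assms] by blast

theorem lemma3p6:
  fixes m n h p q :: int and g1 g2 :: word
  assumes "m \<noteq> 0" and "n \<noteq> 0" and "\<bar>m\<bar> < \<bar>n\<bar>"
    and "h = gcd m n" and "p = \<bar>m\<bar> div h" and "q = \<bar>n\<bar> div h"
    and "\<exists>L \<in> tlines m n. L \<inter> aline m n g1 \<noteq> {} \<and> L \<inter> aline m n g2 \<noteq> {}"
  shows "(bs_less m n (aline m n g2) (aline m n g1) \<longrightarrow>
           (\<exists>g \<in> aline m n g2.
              {aline m n g2 \<inter> L | L. L \<in> tlines m n \<and> L \<inter> aline m n g1 \<noteq> {} \<and> L \<inter> aline m n g2 \<noteq> {}}
              = {elt m n (g @ apow (h * q ^ bs_dist m n (aline m n g1) (aline m n g2) * j)) | j. True}))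
       \<and> (bs_less m n (aline m n g1) (aline m n g2) \<longrightarrow>
           (\<exists>g \<in> aline m n g2.
              {aline m n g2 \<inter> L | L. L \<in> tlines m n \<and> L \<inter> aline m n g1 \<noteq> {} \<and> L \<inter> aline m n g2 \<noteq> {}}
              = {elt m n (g @ apow (h * p ^ bs_dist m n (aline m n g1) (aline m n g2) * j)) | j. True}))"
proof -
  obtain c J where c: "c \<in> aline m n g2" and g1: "aline m n g1 = aline m n (c @ tpow J)"
    using assms(7) by (rule common_tline_link)
  have g2: "aline m n g2 = aline m n c"
    using aline_eq_of_mem[OF c] by simp
  have dist: "bs_dist m n (aline m n g1) (aline m n g2) = nat \<bar>J\<bar>"
    using bs_dist_tpow_sym g1 g2 by simp
  have linked: "linked_points m n g1 g2 = linked_points m n (c @ tpow J) c"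
    by (simp add: linked_points_def g1 g2)
  have gaps: "h * q ^ d = bs_gap m n d" "h * p ^ d = bs_gap n m d" for d
    using assms(4-6) by (simp_all add: bs_gap_def gcd.commute)
  show ?thesis
    unfolding linked_points_def[symmetric] gaps dist
  proof (intro conjI impI)
    assume "bs_less m n (aline m n g2) (aline m n g1)"
    then have "0 < J"
      using bs_less_tpow_pos g1 g2 by simp
    then show "\<exists>g \<in> aline m n g2. linked_points m n g1 g2 =
        {elt m n (g @ apow (bs_gap m n (nat \<bar>J\<bar>) * j)) | j. True}"
      using c linked linked_points_tpow_pos[OF assms(1,2)] by auto
  next
    assume "bs_less m n (aline m n g1) (aline m n g2)"
    then have "J < 0"
      using bs_less_tpow_pos[of m n "c @ tpow J" "- J"] g1 g2 aline_tpow_tpow_uminus by simp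
    then show "\<exists>g \<in> aline m n g2. linked_points m n g1 g2 =
        {elt m n (g @ apow (bs_gap n m (nat \<bar>J\<bar>) * j)) | j. True}"
      using c linked linked_points_tpow_neg[OF assms(1,2)] by auto
  qed
qed

end
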